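(* Let $T>0$, $0<\eta<T$, $\alpha>0$ and $\beta\geq 0$ be constants with $\beta \neq \frac{2T-\alpha \eta ^{2}}{\alpha \eta ^{2}-2\eta+2T}$, and set $D=(\alpha \eta ^{2}-2T)-\beta (2\eta -\alpha \eta ^{2}-2T)$. Then for every $y\in C([0,T],\mathbb{R})$, the boundary value problem \[ u''(t)+y(t)=0,\ t\in(0,T),\qquad u(0)=\beta u(\eta),\quad u(T)=\alpha\int_0^\eta u(s)\,ds \] has a unique solution, given by \begin{align*} u(t)&=\frac{\beta (2T-\alpha \eta ^{2})-2\beta (1-\alpha \eta)t}{D}\int_{0}^{\eta }(\eta -s)y(s)\,ds +\frac{\alpha \beta\eta -\alpha (\beta -1)t}{D}\int_{0}^{\eta }(\eta -s)^{2}y(s)\,ds \\ &\quad+\frac{2(\beta-1)t-2\beta \eta }{D}\int_{0}^{T}(T-s)y(s)\,ds- \int_{0}^{t}(t-s)y(s)\,ds. \end{align*}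
   Context: Standing assumptions of the paper: $T>0$, $\eta\in(0,T)$, $\alpha>0$, $\beta\geq0$. A solution is a function $u\in C^2([0,T])$ satisfying the differential equation on $(0,T)$ and the two boundary conditions. *)

theory Defs
  imports "HOL-Analysis.Analysis"
begin

definition bvp_solution ::
  "real \<Rightarrow> real \<Rightarrow> real \<Rightarrow> real \<Rightarrow> (real \<Rightarrow> real) \<Rightarrow> (real \<Rightarrow> real) \<Rightarrow> bool" where
  "bvp_solution T \<eta> \<alpha> \<beta> y u \<longleftrightarrow>
     (\<exists>u' u''. (\<forall>t\<in>{0..T}. (u has_real_derivative u' t) (at t within {0..T}))
            \<and> (\<forall>t\<in>{0..T}. (u' has_real_derivative u'' t) (at t within {0..T}))
            \<and> continuous_on {0..T} u''
            \<and> (\<forall>t\<in>{0<..<T}. u'' t + y t = 0))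
     \<and> u 0 = \<beta> * u \<eta>
     \<and> u T = \<alpha> * integral {0..\<eta>} u"

end

theory Submission
  imports Defs
begin

text \<open>With \<open>F t = \<integral>\<^sub>0\<^sup>t (t - s) y(s) ds\<close> one has \<open>F'' = y\<close>, so every \<open>A + B t - F t\<close> solves
  \<open>u'' + y = 0\<close>, and two solutions differ by a function with vanishing second derivative, i.e. an
  affine one. Since \<open>\<integral>\<^sub>0\<^sup>\<eta> F = 1/2 \<integral>\<^sub>0\<^sup>\<eta> (\<eta> - s)\<^sup>2 y(s) ds\<close>, the two boundary conditions are a
  linear system in \<open>(A, B)\<close> with determinant \<open>-D/2\<close>. The hypothesis on \<open>\<beta>\<close> forces \<open>D \<noteq> 0\<close>,
  which yields the displayed solution and kills every affine solution of the homogeneous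
  problem.\<close>

lemma integral_upper_has_real_derivative:
  fixes g :: "real \<Rightarrow> real"
  assumes "continuous_on {a..b} g" "t \<in> {a..b}"
  shows "((\<lambda>t. integral {a..t} g) has_real_derivative g t) (at t within {a..b})"
  using integral_has_vector_derivative[OF assms]
  by (simp add: has_real_derivative_iff_has_vector_derivative)

lemma integral_linear_kernel_split:
  fixes y :: "real \<Rightarrow> real"
  assumes "continuous_on {a..t} y"
  shows "integral {a..t} (\<lambda>s. (t - s) * y s) = t * integral {a..t} y - integral {a..t} (\<lambda>s. s * y s)"
proof -
  have "(\<lambda>s. t * y s) integrable_on {a..t}" "(\<lambda>s. s * y s) integrable_on {a..t}"
    by (rule integrable_continuous_interval, intro continuous_intros assms)+
  then show ?thesis
    by (simp add: left_diff_distrib integral_diff)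
qed

lemma integral_square_kernel_split:
  fixes y :: "real \<Rightarrow> real"
  assumes "continuous_on {a..t} y"
  shows "integral {a..t} (\<lambda>s. (t - s)\<^sup>2 * y s)
       = t\<^sup>2 * integral {a..t} y - 2 * t * integral {a..t} (\<lambda>s. s * y s) + integral {a..t} (\<lambda>s. s\<^sup>2 * y s)"
proof -
  have "(\<lambda>s. t\<^sup>2 * y s) integrable_on {a..t}" "(\<lambda>s. 2 * t * (s * y s)) integrable_on {a..t}"
    "(\<lambda>s. s\<^sup>2 * y s) integrable_on {a..t}"
    by (rule integrable_continuous_interval, intro continuous_intros assms)+
  moreover have "(\<lambda>s. (t - s)\<^sup>2 * y s) = (\<lambda>s. t\<^sup>2 * y s - 2 * t * (s * y s) + s\<^sup>2 * y s)"
    by (simp add: fun_eq_iff algebra_simps power2_eq_square)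
  ultimately show ?thesis
    by (simp add: integral_diff integral_add integrable_diff)
qed

lemma volterra_has_real_derivative:
  fixes y :: "real \<Rightarrow> real"
  assumes y: "continuous_on {a..b} y" and t: "t \<in> {a..b}"
  shows "((\<lambda>t. integral {a..t} (\<lambda>s. (t - s) * y s)) has_real_derivative integral {a..t} y)
           (at t within {a..b})"
proof -
  have ys: "continuous_on {a..x} y" if "x \<in> {a..b}" for x
    using y that by (auto intro: continuous_on_subset)
  \<comment> \<open>The integrand depends on \<open>t\<close>; splitting the kernel leaves only integrals with fixed integrands.\<close>
  have "((\<lambda>x. x * integral {a..x} y - integral {a..x} (\<lambda>s. s * y s)) has_real_derivative
          integral {a..t} y) (at t within {a..b})"
    by (rule derivative_eq_intros integral_upper_has_real_derivative y t refl
        | intro continuous_intros y | simp)+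
  then show ?thesis
    by (rule has_field_derivative_transform_within[OF _ zero_less_one t])
       (simp_all add: integral_linear_kernel_split[OF ys])
qed

lemma volterra_square_has_real_derivative:
  fixes y :: "real \<Rightarrow> real"
  assumes y: "continuous_on {a..b} y" and t: "t \<in> {a..b}"
  shows "((\<lambda>t. integral {a..t} (\<lambda>s. (t - s)\<^sup>2 * y s)) has_real_derivative
            2 * integral {a..t} (\<lambda>s. (t - s) * y s)) (at t within {a..b})"
proof -
  have ys: "continuous_on {a..x} y" if "x \<in> {a..b}" for x
    using y that by (auto intro: continuous_on_subset)
  have "((\<lambda>x. x\<^sup>2 * integral {a..x} y - 2 * x * integral {a..x} (\<lambda>s. s * y s)
              + integral {a..x} (\<lambda>s. s\<^sup>2 * y s)) has_real_derivative
          2 * (t * integral {a..t} y - integral {a..t} (\<lambda>s. s * y s))) (at t within {a..b})"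
    by (rule derivative_eq_intros integral_upper_has_real_derivative y t refl
        | intro continuous_intros y | simp add: algebra_simps power2_eq_square)+
  then show ?thesis
    unfolding integral_linear_kernel_split[OF ys[OF t]]
    by (rule has_field_derivative_transform_within[OF _ zero_less_one t])
       (simp add: integral_square_kernel_split[OF ys])
qed

lemma volterra_has_integral:
  fixes y :: "real \<Rightarrow> real"
  assumes y: "continuous_on {a..b} y" and e: "e \<in> {a..b}"
  shows "((\<lambda>t. integral {a..t} (\<lambda>s. (t - s) * y s)) has_integral
            integral {a..e} (\<lambda>s. (e - s)\<^sup>2 * y s) / 2) {a..e}"
proof -
  have "((\<lambda>t. integral {a..t} (\<lambda>s. (t - s) * y s)) has_integral
          integral {a..e} (\<lambda>s. (e - s)\<^sup>2 * y s) / 2 - integral {a..a} (\<lambda>s. (a - s)\<^sup>2 * y s) / 2) {a..e}"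
  proof (rule fundamental_theorem_of_calculus)
    fix x assume x: "x \<in> {a..e}"
    then have "((\<lambda>t. integral {a..t} (\<lambda>s. (t - s)\<^sup>2 * y s) / 2) has_real_derivative
                 integral {a..x} (\<lambda>s. (x - s) * y s)) (at x within {a..b})"
      using volterra_square_has_real_derivative[OF y, of x] e
      by (auto intro!: derivative_eq_intros)
    then show "((\<lambda>t. integral {a..t} (\<lambda>s. (t - s)\<^sup>2 * y s) / 2) has_vector_derivative
                 integral {a..x} (\<lambda>s. (x - s) * y s)) (at x within {a..e})"
      using e by (auto simp: has_real_derivative_iff_has_vector_derivative[symmetric]
                      intro: DERIV_subset)
  qed (use e in auto)
  then show ?thesis
    by simp
qed

lemma affine_has_integral:
  fixes A B e :: real
  assumes "0 \<le> e"
  shows "((\<lambda>t. A + B * t) has_integral A * e + B * e\<^sup>2 / 2) {0..e}"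
proof -
  have "((\<lambda>t. A + B * t) has_integral (A * e + B * e\<^sup>2 / 2) - (A * 0 + B * 0\<^sup>2 / 2)) {0..e}"
    using assms
    by (intro fundamental_theorem_of_calculus)
       (auto simp: has_real_derivative_iff_has_vector_derivative[symmetric]
         intro!: derivative_eq_intros)
  then show ?thesis
    by simp
qed

lemma affine_if_second_derivative_vanishes:
  fixes w w' w'' :: "real \<Rightarrow> real"
  assumes "a < b"
    and w: "\<And>t. t \<in> {a..b} \<Longrightarrow> (w has_real_derivative w' t) (at t within {a..b})"
    and w': "\<And>t. t \<in> {a..b} \<Longrightarrow> (w' has_real_derivative w'' t) (at t within {a..b})"
    and w'': "\<And>t. t \<in> {a<..<b} \<Longrightarrow> w'' t = 0"
    and t: "t \<in> {a..b}"
  shows "w t = w a + w' a * (t - a)"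
proof -
  have interior: "DERIV f x :> f' x"
    if "\<And>t. t \<in> {a..b} \<Longrightarrow> (f has_real_derivative f' t) (at t within {a..b})" "x \<in> {a<..<b}"
    for f f' :: "real \<Rightarrow> real" and x
  proof -
    have "a < x" "x < b"
      using that(2) by auto
    then show ?thesis
      using that(1)[of x] at_within_Icc_at[of a x b] by simp
  qed
  have slope_const: "w' x = w' a" if "x \<in> {a..b}" for x
  proof (rule DERIV_isconst2[OF \<open>a < b\<close>])
    show "continuous_on {a..b} w'"
      using w' DERIV_continuous continuous_on_eq_continuous_within by blast
    show "DERIV w' z :> 0" if "a < z" "z < b" for z
      using interior[OF w', of z] w''[of z] that by simp
  qed (use that in auto)
  have "w x - w' a * x = w a - w' a * a" if "x \<in> {a..b}" for x
  proof (rule DERIV_isconst2[OF \<open>a < b\<close>, where f = "\<lambda>t. w t - w' a * t"])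
    show "continuous_on {a..b} (\<lambda>t. w t - w' a * t)"
      using w DERIV_continuous continuous_on_eq_continuous_within
      by (intro continuous_intros) blast
    show "DERIV (\<lambda>t. w t - w' a * t) z :> 0" if "a < z" "z < b" for z
      using interior[OF w, of z] slope_const[of z] that
      by (auto intro!: derivative_eq_intros)
  qed (use that in auto)
  then show ?thesis
    using t by (simp add: algebra_simps)
qed

lemma bvp_solution_continuous:
  assumes "bvp_solution T \<eta> \<alpha> \<beta> y u"
  shows "continuous_on {0..T} u"
  using assms DERIV_continuous continuous_on_eq_continuous_within
  unfolding bvp_solution_def by blast

lemma bvp_solution_diff:
  assumes v: "bvp_solution T \<eta> \<alpha> \<beta> y v" and u: "bvp_solution T \<eta> \<alpha> \<beta> y u"
    and "0 \<le> \<eta>" "\<eta> \<le> T"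
  shows "bvp_solution T \<eta> \<alpha> \<beta> (\<lambda>_. 0) (\<lambda>t. v t - u t)"
proof -
  obtain v' v'' where
    dv: "\<forall>t\<in>{0..T}. (v has_real_derivative v' t) (at t within {0..T})" and
    dv': "\<forall>t\<in>{0..T}. (v' has_real_derivative v'' t) (at t within {0..T})" and
    cv'': "continuous_on {0..T} v''" and ode_v: "\<forall>t\<in>{0<..<T}. v'' t + y t = 0" and
    bc_v: "v 0 = \<beta> * v \<eta>" "v T = \<alpha> * integral {0..\<eta>} v"
    using v unfolding bvp_solution_def by blast
  obtain u' u'' where
    du: "\<forall>t\<in>{0..T}. (u has_real_derivative u' t) (at t within {0..T})" and
    du': "\<forall>t\<in>{0..T}. (u' has_real_derivative u'' t) (at t within {0..T})" and
    cu'': "continuous_on {0..T} u''" and ode_u: "\<forall>t\<in>{0<..<T}. u'' t + y t = 0" and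
    bc_u: "u 0 = \<beta> * u \<eta>" "u T = \<alpha> * integral {0..\<eta>} u"
    using u unfolding bvp_solution_def by blast
  have sub: "{0..\<eta>} \<subseteq> {0..T}"
    using assms(4) by auto
  have "v integrable_on {0..\<eta>}" "u integrable_on {0..\<eta>}"
    using continuous_on_subset[OF bvp_solution_continuous[OF v] sub]
      continuous_on_subset[OF bvp_solution_continuous[OF u] sub]
    by (auto intro: integrable_continuous_interval)
  then have "integral {0..\<eta>} (\<lambda>t. v t - u t) = integral {0..\<eta>} v - integral {0..\<eta>} u"
    by (rule integral_diff)
  then have "v T - u T = \<alpha> * integral {0..\<eta>} (\<lambda>t. v t - u t)"
    using bc_v bc_u by (simp add: right_diff_distrib)
  moreover have "v 0 - u 0 = \<beta> * (v \<eta> - u \<eta>)"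
    using bc_v bc_u by (simp add: algebra_simps)
  moreover have "\<forall>t\<in>{0..T}. ((\<lambda>t. v t - u t) has_real_derivative v' t - u' t) (at t within {0..T})"
    using dv du by (simp add: DERIV_diff)
  moreover have "\<forall>t\<in>{0..T}. ((\<lambda>t. v' t - u' t) has_real_derivative v'' t - u'' t) (at t within {0..T})"
    using dv' du' by (simp add: DERIV_diff)
  moreover have "continuous_on {0..T} (\<lambda>t. v'' t - u'' t)"
    using cv'' cu'' by (rule continuous_on_diff)
  moreover have "\<forall>t\<in>{0<..<T}. v'' t - u'' t + 0 = 0"
    using ode_v ode_u by fastforce
  ultimately show ?thesis
    unfolding bvp_solution_def
    by (intro conjI exI[of _ "\<lambda>t. v' t - u' t"] exI[of _ "\<lambda>t. v'' t - u'' t"]) simp_all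
qed

lemma bvp_homogeneous_solution_zero:
  assumes "0 < T" "0 \<le> \<eta>" "\<eta> \<le> T"
    and D: "(\<alpha>*\<eta>\<^sup>2 - 2*T) - \<beta>*(2*\<eta> - \<alpha>*\<eta>\<^sup>2 - 2*T) \<noteq> 0"
    and w: "bvp_solution T \<eta> \<alpha> \<beta> (\<lambda>_. 0) w"
    and t: "t \<in> {0..T}"
  shows "w t = 0"
proof -
  obtain w' w'' where
    dw: "\<forall>t\<in>{0..T}. (w has_real_derivative w' t) (at t within {0..T})" and
    dw': "\<forall>t\<in>{0..T}. (w' has_real_derivative w'' t) (at t within {0..T})" and
    w'': "\<forall>t\<in>{0<..<T}. w'' t + 0 = 0" and
    bc: "w 0 = \<beta> * w \<eta>" "w T = \<alpha> * integral {0..\<eta>} w"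
    using w unfolding bvp_solution_def by blast
  define a c where "a = w 0" and "c = w' 0"
  have affine: "w x = a + c * x" if "x \<in> {0..T}" for x
    using affine_if_second_derivative_vanishes[OF \<open>0 < T\<close>, of w w' w'' x] dw dw' w'' that
    by (simp add: a_def c_def)
  have "(w has_integral a * \<eta> + c * \<eta>\<^sup>2 / 2) {0..\<eta>}"
    using affine_has_integral[OF \<open>0 \<le> \<eta>\<close>, of a c] affine \<open>\<eta> \<le> T\<close>
    by (subst has_integral_cong[of _ _ "\<lambda>x. a + c * x"]) auto
  then have "a + c * T = \<alpha> * (a * \<eta> + c * \<eta>\<^sup>2 / 2)"
    using bc(2) affine[of T] \<open>0 < T\<close> by (simp add: integral_unique)
  moreover have "a = \<beta> * (a + c * \<eta>)"
    using bc(1) affine[of 0] affine[of \<eta>] assms(1-3) by simp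
  ultimately have "a * ((\<alpha>*\<eta>\<^sup>2 - 2*T) - \<beta>*(2*\<eta> - \<alpha>*\<eta>\<^sup>2 - 2*T)) = 0"
    and "c * ((\<alpha>*\<eta>\<^sup>2 - 2*T) - \<beta>*(2*\<eta> - \<alpha>*\<eta>\<^sup>2 - 2*T)) = 0"
    by (simp_all add: algebra_simps power2_eq_square; algebra)+
  then show ?thesis
    using affine[OF t] D by simp
qed

lemma volterra_bvp_solution:
  fixes y :: "real \<Rightarrow> real" and A B :: real
  assumes y: "continuous_on {0..T} y"
  defines "u \<equiv> \<lambda>t. A + B * t - integral {0..t} (\<lambda>s. (t - s) * y s)"
  assumes "u 0 = \<beta> * u \<eta>" "u T = \<alpha> * integral {0..\<eta>} u"
  shows "bvp_solution T \<eta> \<alpha> \<beta> y u"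
proof -
  have "\<forall>t\<in>{0..T}. (u has_real_derivative B - integral {0..t} y) (at t within {0..T})"
    unfolding u_def
    by (auto intro!: derivative_eq_intros volterra_has_real_derivative[OF y])
  moreover have "\<forall>t\<in>{0..T}. ((\<lambda>t. B - integral {0..t} y) has_real_derivative - y t) (at t within {0..T})"
    by (auto intro!: derivative_eq_intros integral_upper_has_real_derivative[OF y])
  moreover have "continuous_on {0..T} (\<lambda>t. - y t)"
    using y by (rule continuous_on_minus)
  ultimately show ?thesis
    unfolding bvp_solution_def using assms(3,4)
    by (intro conjI exI[of _ "\<lambda>t. B - integral {0..t} y"] exI[of _ "\<lambda>t. - y t"]) simp_all
qed

lemma bvp_determinant_nonzero:
  fixes T \<eta> \<alpha> \<beta> :: real
  assumes "0 < \<eta>" "\<eta> < T"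
    and "\<beta> \<noteq> (2*T - \<alpha>*\<eta>\<^sup>2) / (\<alpha>*\<eta>\<^sup>2 - 2*\<eta> + 2*T)"
  shows "(\<alpha>*\<eta>\<^sup>2 - 2*T) - \<beta>*(2*\<eta> - \<alpha>*\<eta>\<^sup>2 - 2*T) \<noteq> 0"
proof (cases "\<alpha>*\<eta>\<^sup>2 - 2*\<eta> + 2*T = 0")
  case True
  then show ?thesis
    using assms(1,2) by (simp add: algebra_simps)
next
  case False
  then show ?thesis
    using assms(3) by (simp add: field_simps)
qed

theorem lemma2p1:
  fixes T \<eta> \<alpha> \<beta> :: real and y :: "real \<Rightarrow> real"
  assumes "T > 0" "0 < \<eta>" "\<eta> < T" "\<alpha> > 0" "\<beta> \<ge> 0"
    and "\<beta> \<noteq> (2*T - \<alpha>*\<eta>^2) / (\<alpha>*\<eta>^2 - 2*\<eta> + 2*T)"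
    and "continuous_on {0..T} y"
  defines "D \<equiv> (\<alpha>*\<eta>^2 - 2*T) - \<beta>*(2*\<eta> - \<alpha>*\<eta>^2 - 2*T)"
  defines "u \<equiv> (\<lambda>t.
      (\<beta>*(2*T - \<alpha>*\<eta>^2) - 2*\<beta>*(1 - \<alpha>*\<eta>)*t) / D * integral {0..\<eta>} (\<lambda>s. (\<eta> - s) * y s)
    + (\<alpha>*\<beta>*\<eta> - \<alpha>*(\<beta> - 1)*t) / D * integral {0..\<eta>} (\<lambda>s. (\<eta> - s)^2 * y s)
    + (2*(\<beta> - 1)*t - 2*\<beta>*\<eta>) / D * integral {0..T} (\<lambda>s. (T - s) * y s)
    - integral {0..t} (\<lambda>s. (t - s) * y s))"
  shows "bvp_solution T \<eta> \<alpha> \<beta> y u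
    \<and> (\<forall>v. bvp_solution T \<eta> \<alpha> \<beta> y v \<longrightarrow> (\<forall>t\<in>{0..T}. v t = u t))"
proof -
  note y = \<open>continuous_on {0..T} y\<close>
  have D: "D \<noteq> 0"
    unfolding D_def using bvp_determinant_nonzero assms(2,3,6) by blast
  define F where "F t = integral {0..t} (\<lambda>s. (t - s) * y s)" for t
  define I2 where "I2 = integral {0..\<eta>} (\<lambda>s. (\<eta> - s)\<^sup>2 * y s)"
  define A where "A = (\<beta>*(2*T - \<alpha>*\<eta>\<^sup>2) * F \<eta> + \<alpha>*\<beta>*\<eta> * I2 - 2*\<beta>*\<eta> * F T) / D"
  define B where "B = (2*(\<beta> - 1) * F T - 2*\<beta>*(1 - \<alpha>*\<eta>) * F \<eta> - \<alpha>*(\<beta> - 1) * I2) / D"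
  have u_eq: "u = (\<lambda>t. A + B * t - F t)"
    unfolding u_def A_def B_def F_def I2_def using D by (simp add: fun_eq_iff field_simps)
  have "(u has_integral (A * \<eta> + B * \<eta>\<^sup>2 / 2) - I2 / 2) {0..\<eta>}"
    unfolding u_eq F_def I2_def using assms(2,3)
    by (intro has_integral_diff affine_has_integral volterra_has_integral[OF y]) auto
  then have int_u: "integral {0..\<eta>} u = A * \<eta> + B * \<eta>\<^sup>2 / 2 - I2 / 2"
    by (rule integral_unique)
  have "A = \<beta> * (A + B * \<eta> - F \<eta>)" "A + B * T - F T = \<alpha> * (A * \<eta> + B * \<eta>\<^sup>2 / 2 - I2 / 2)"
    using D D_def[THEN meta_eq_to_obj_eq] unfolding A_def B_def
    by (simp_all add: field_simps power2_eq_square; algebra)+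
  then have "u 0 = \<beta> * u \<eta>" "u T = \<alpha> * integral {0..\<eta>} u"
    unfolding int_u by (simp_all add: u_eq F_def)
  then have solution: "bvp_solution T \<eta> \<alpha> \<beta> y u"
    unfolding u_eq F_def by (rule volterra_bvp_solution[OF y])
  have "v t = u t" if "bvp_solution T \<eta> \<alpha> \<beta> y v" "t \<in> {0..T}" for v t
    using bvp_homogeneous_solution_zero[OF \<open>T > 0\<close> _ _ D[unfolded D_def]
        bvp_solution_diff[OF that(1) solution] that(2)] assms(2,3)
    by simp
  with solution show ?thesis
    by blast
qed

end
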